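(* Let $S$ be a topological Clifford semigroup in which every maximal subgroup $G_e$ is open. Then $E(S)$ is a $G_\delta$-subset of $S$ if and only if, for every $e\in E(S)$, the singleton $\{e\}$ is a $G_\delta$-subset of $G_e$.
   Context: A Clifford semigroup is an inverse semigroup (each $x$ has a unique $x^{-1}$ with $xx^{-1}x=x$, $x^{-1}xx^{-1}=x^{-1}$) with $xx^{-1}=x^{-1}x$ for all $x$; topological means multiplication and inversion are continuous. $E(S)$ is the set of idempotents; $G_e:=\{x: xx^{-1}=e\}$ with the subspace topology. A $G_\delta$-subset is a countable intersection of open sets. *)

theory Defs
  imports "HOL-Analysis.Analysis"
begin

definition inverse_semigroup :: "('a::semigroup_mult) itself \<Rightarrow> bool" where
  "inverse_semigroup _ \<longleftrightarrow> (\<forall>x::'a. \<exists>!y. x * y * x = x \<and> y * x * y = y)"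

definition sinv :: "'a::semigroup_mult \<Rightarrow> 'a" where
  "sinv x = (THE y. x * y * x = x \<and> y * x * y = y)"

definition clifford_semigroup :: "('a::semigroup_mult) itself \<Rightarrow> bool" where
  "clifford_semigroup T \<longleftrightarrow> inverse_semigroup T \<and> (\<forall>x::'a. x * sinv x = sinv x * x)"

definition topological_clifford_semigroup ::
    "('a::{semigroup_mult, topological_space}) itself \<Rightarrow> bool" where
  "topological_clifford_semigroup T \<longleftrightarrow> clifford_semigroup T
     \<and> continuous_on (UNIV :: ('a \<times> 'a) set) (\<lambda>p. fst p * snd p)
     \<and> continuous_on (UNIV :: 'a set) sinv"

definition idempotents :: "'a::semigroup_mult set" where
  "idempotents = {e. e * e = e}"

definition maxsubgroup :: "'a::semigroup_mult \<Rightarrow> 'a set" where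
  "maxsubgroup e = {x. x * sinv x = e}"

end

theory Submission
  imports Defs
begin

text \<open>The maximal subgroups \<open>G\<^sub>e\<close> are pairwise disjoint, open by hypothesis, and
  \<open>E(S) \<inter> G\<^sub>e = {e}\<close>. A set covered by a disjoint family of open sets is \<open>G\<^sub>\<delta>\<close> iff
  its trace on each member is: given \<open>{e} = \<Inter>\<^sub>n V\<^sub>e\<^sub>,\<^sub>n\<close> with open \<open>V\<^sub>e\<^sub>,\<^sub>n\<close>,
  the open sets \<open>\<Union>\<^sub>e (V\<^sub>e\<^sub>,\<^sub>n \<inter> G\<^sub>e)\<close> intersect exactly in \<open>E(S)\<close>.\<close>

lemma gdelta_in_UN_disjoint_open:
  assumes disj: "disjoint_family_on A I"
    and open_A: "\<And>i. i \<in> I \<Longrightarrow> openin X (A i)"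
    and gdelta_S: "\<And>i. i \<in> I \<Longrightarrow> gdelta_in X (S i)"
    and S_A: "\<And>i. i \<in> I \<Longrightarrow> S i \<subseteq> A i"
  shows "gdelta_in X (\<Union>i\<in>I. S i)"
proof -
  have "\<forall>i\<in>I. \<exists>D. (\<forall>n::nat. openin X (D n)) \<and> \<Inter>(range D) = S i"
    using gdelta_S unfolding gdelta_in_descending by meson
  from bchoice[OF this] obtain C :: "_ \<Rightarrow> nat \<Rightarrow> _"
    where "\<forall>i\<in>I. (\<forall>n. openin X (C i n)) \<and> \<Inter>(range (C i)) = S i" ..
  then have open_C: "\<And>i n. i \<in> I \<Longrightarrow> openin X (C i n)"
    and S_eq: "\<And>i. i \<in> I \<Longrightarrow> S i = \<Inter>(range (C i))"
    by simp_all
  define U where "U n = (\<Union>i\<in>I. C i n \<inter> A i)" for n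
  have "\<Inter>(range U) = (\<Union>i\<in>I. S i)"
  proof (intro equalityI subsetI)
    fix x assume x: "x \<in> \<Inter>(range U)"
    then obtain i where i: "i \<in> I" "x \<in> A i"
      unfolding U_def by blast
    have "x \<in> C i n" for n
    proof -
      obtain j where "j \<in> I" "x \<in> C j n" "x \<in> A j"
        using x unfolding U_def by blast
      with i disj have "j = i"
        unfolding disjoint_family_on_def by blast
      with \<open>x \<in> C j n\<close> show ?thesis by simp
    qed
    with i S_eq show "x \<in> (\<Union>i\<in>I. S i)" by blast
  next
    fix x assume "x \<in> (\<Union>i\<in>I. S i)"
    then obtain i where i: "i \<in> I" "x \<in> S i" by blast
    then have "x \<in> A i" "\<And>n. x \<in> C i n"
      using S_A S_eq by blast+
    with i show "x \<in> \<Inter>(range U)"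
      unfolding U_def by blast
  qed
  moreover have "openin X (U n)" for n
    unfolding U_def using open_C open_A by (intro openin_Union openin_Int) auto
  then have "gdelta_in X (\<Inter>(range U))"
    by (intro gdelta_in_Inter) (auto intro: open_imp_gdelta_in)
  ultimately show ?thesis by simp
qed

lemma gdelta_in_iff_Int_disjoint_open_cover:
  assumes disj: "disjoint_family_on A I"
    and open_A: "\<And>i. i \<in> I \<Longrightarrow> openin X (A i)"
    and cover: "S \<subseteq> (\<Union>i\<in>I. A i)"
  shows "gdelta_in X S \<longleftrightarrow> (\<forall>i\<in>I. gdelta_in X (S \<inter> A i))"
proof
  assume "gdelta_in X S"
  then show "\<forall>i\<in>I. gdelta_in X (S \<inter> A i)"
    using open_A by (simp add: gdelta_in_Int open_imp_gdelta_in)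
next
  assume "\<forall>i\<in>I. gdelta_in X (S \<inter> A i)"
  then have "gdelta_in X (\<Union>i\<in>I. S \<inter> A i)"
    using disj open_A by (intro gdelta_in_UN_disjoint_open) auto
  moreover have "(\<Union>i\<in>I. S \<inter> A i) = S"
    using cover by blast
  ultimately show "gdelta_in X S" by simp
qed

lemma sinv_idempotent:
  fixes e :: "'a::semigroup_mult"
  assumes "inverse_semigroup TYPE('a)" and "e \<in> idempotents"
  shows "sinv e = e"
proof -
  have "\<exists>!y. e * y * e = e \<and> y * e * y = y"
    using assms(1) unfolding inverse_semigroup_def by blast
  moreover have "e * e * e = e"
    using assms(2) by (simp add: idempotents_def)
  ultimately show ?thesis
    unfolding sinv_def by (simp add: the1_equality)
qed

lemma disjoint_family_maxsubgroup: "disjoint_family maxsubgroup"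
  by (auto simp: disjoint_family_on_def maxsubgroup_def)

lemma idempotents_Int_maxsubgroup:
  fixes e :: "'a::semigroup_mult"
  assumes "inverse_semigroup TYPE('a)" and "e \<in> idempotents"
  shows "idempotents \<inter> maxsubgroup e = {e}"
  using assms sinv_idempotent[OF assms(1)]
  by (auto simp: idempotents_def maxsubgroup_def)

theorem lemma4p4:
  fixes T :: "('a::{semigroup_mult, topological_space}) itself"
  assumes "topological_clifford_semigroup T"
    and "\<forall>e::'a \<in> idempotents. open (maxsubgroup e)"
  shows "gdelta_in euclidean (idempotents :: 'a set) \<longleftrightarrow>
         (\<forall>e::'a \<in> idempotents. gdelta_in (subtopology euclidean (maxsubgroup e)) {e})"
proof -
  have inv: "inverse_semigroup TYPE('a)"
    using assms(1) unfolding topological_clifford_semigroup_def clifford_semigroup_def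
      inverse_semigroup_def by simp
  have E_G: "idempotents \<inter> maxsubgroup e = {e}" if "e \<in> idempotents" for e :: 'a
    using idempotents_Int_maxsubgroup[OF inv that] .
  have "gdelta_in euclidean (idempotents :: 'a set) \<longleftrightarrow>
        (\<forall>e::'a \<in> idempotents. gdelta_in euclidean (idempotents \<inter> maxsubgroup e))"
    using assms(2) E_G disjoint_family_on_mono[OF subset_UNIV disjoint_family_maxsubgroup]
    by (intro gdelta_in_iff_Int_disjoint_open_cover) auto
  also have "\<dots> \<longleftrightarrow> (\<forall>e::'a \<in> idempotents. gdelta_in euclidean {e})"
    using E_G by simp
  also have "\<dots> \<longleftrightarrow>
        (\<forall>e::'a \<in> idempotents. gdelta_in (subtopology euclidean (maxsubgroup e)) {e})"
    using assms(2) E_G by (auto simp: gdelta_in_gdelta_subtopology open_imp_gdelta_in)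
  finally show ?thesis .
qed

end
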